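(* For $y>0$, the function $$p_a(y)=\frac{a}{a-1}\,\frac{\gamma(a,y)}{\gamma(a-1,y)}$$ is increasing as a function of $a$ for $a>1$.
   Context: $\gamma(a,y)=\int_0^y t^{a-1}e^{-t}\,dt$ is the lower incomplete gamma function. *)

theory Defs
  imports "HOL-Analysis.Analysis"
begin

definition lower_inc_gamma :: "real \<Rightarrow> real \<Rightarrow> real" where
  "lower_inc_gamma a y = integral {0..y} (\<lambda>t. t powr (a - 1) * exp (- t))"

definition p_fun :: "real \<Rightarrow> real \<Rightarrow> real" where
  "p_fun a y = (a / (a - 1)) * (lower_inc_gamma a y / lower_inc_gamma (a - 1) y)"

end

theory Submission
  imports Defs
begin

text \<open>Integration by parts, s \<gamma>(s,y) = y^s e^-y + \<gamma>(s+1,y), turns p_a(y) into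
  M(a+1)/M(a) with M(x) = y^(x-1) e^-y + \<gamma>(x,y), the (x-1)-th moment of the measure
  \<nu> = e^-t dt + e^-y \<delta>_y on [0,y]. So p_a(y) is the mean of t under the weight t^(a-1) \<nu>,
  and it increases with a: for a < b and c = p_a(y),
    \<integral> (t - c) t^(b-1) d\<nu> = \<integral> (t - c) (t^(b-a) - c^(b-a)) t^(a-1) d\<nu> + c^(b-a) \<integral> (t - c) t^(a-1) d\<nu>,
  where the last integral vanishes by the choice of c and the first integrand is nonnegative
  and not identically zero; hence p_b(y) > c.\<close>

lemma continuous_on_powr_mult_exp:
  assumes "s > 0"
  shows "continuous_on {0..y} (\<lambda>t::real. t powr s * exp (- t))"
  using assms by (intro continuous_intros continuous_on_powr') auto

lemma has_integral_lower_inc_gamma: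
  assumes "a > 1"
  shows "((\<lambda>t. t powr (a - 1) * exp (- t)) has_integral lower_inc_gamma a y) {0..y}"
proof -
  have "(\<lambda>t::real. t powr (a - 1) * exp (- t)) integrable_on {0..y}"
    using assms by (intro integrable_continuous_real continuous_on_powr_mult_exp) simp
  then show ?thesis
    unfolding lower_inc_gamma_def by (simp add: integrable_integral)
qed

lemma lower_inc_gamma_nonneg:
  assumes "a > 1"
  shows "lower_inc_gamma a y \<ge> 0"
  by (rule has_integral_nonneg[OF has_integral_lower_inc_gamma[OF assms]]) auto

lemma lower_inc_gamma_recurrence:
  assumes "s > 0" "y > 0"
  shows "s * lower_inc_gamma s y = y powr s * exp (- y) + lower_inc_gamma (s + 1) y"
proof -
  define F where "F = (\<lambda>t::real. t powr s * exp (- t))"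
  have "((\<lambda>t. s * t powr (s - 1) * exp (- t) - t powr s * exp (- t)) has_integral F y - F 0) {0..y}"
  proof (rule fundamental_theorem_of_calculus_interior)
    show "0 \<le> y" using assms by simp
    show "continuous_on {0..y} F"
      unfolding F_def using assms(1) by (rule continuous_on_powr_mult_exp)
    fix x :: real assume "x \<in> {0<..<y}"
    then have "(F has_real_derivative s * x powr (s - 1) * exp (- x) - x powr s * exp (- x)) (at x)"
      unfolding F_def
      by (auto intro!: derivative_eq_intros has_real_derivative_powr simp: algebra_simps)
    then show "(F has_vector_derivative s * x powr (s - 1) * exp (- x) - x powr s * exp (- x)) (at x)"
      by (simp add: has_real_derivative_iff_has_vector_derivative)
  qed
  from has_integral_add[OF this has_integral_lower_inc_gamma[of "s + 1" y]] assms
  have "((\<lambda>t. s * t powr (s - 1) * exp (- t))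
          has_integral y powr s * exp (- y) + lower_inc_gamma (s + 1) y) {0..y}"
    by (simp add: F_def)
  from has_integral_divide[OF this, of s] assms(1)
  have "((\<lambda>t. t powr (s - 1) * exp (- t))
          has_integral (y powr s * exp (- y) + lower_inc_gamma (s + 1) y) / s) {0..y}"
    by simp
  then show ?thesis
    unfolding lower_inc_gamma_def using assms(1) by (simp add: integral_unique)
qed

definition gamma_moment :: "real \<Rightarrow> real \<Rightarrow> real" where
  "gamma_moment a y = y powr (a - 1) * exp (- y) + lower_inc_gamma a y"

lemma gamma_moment_pos:
  assumes "a > 1" "y > 0"
  shows "gamma_moment a y > 0"
  unfolding gamma_moment_def
  using lower_inc_gamma_nonneg[OF assms(1), of y] assms(2) by (simp add: add_pos_nonneg)

lemma gamma_moment_eq_lower_inc_gamma: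
  assumes "a > 1" "y > 0"
  shows "gamma_moment a y = (a - 1) * lower_inc_gamma (a - 1) y"
  using lower_inc_gamma_recurrence[of "a - 1" y] assms by (simp add: gamma_moment_def)

lemma p_fun_eq_gamma_moment_ratio:
  assumes "a > 1" "y > 0"
  shows "p_fun a y = gamma_moment (a + 1) y / gamma_moment a y"
  using gamma_moment_eq_lower_inc_gamma[of a y] gamma_moment_eq_lower_inc_gamma[of "a + 1" y] assms
  by (simp add: p_fun_def)

lemma has_integral_gamma_moment_centered:
  assumes "x > 1" "y > 0"
  shows "((\<lambda>t. (t - c) * t powr (x - 1) * exp (- t)) has_integral
          gamma_moment (x + 1) y - c * gamma_moment x y - (y - c) * y powr (x - 1) * exp (- y)) {0..y}"
proof -
  have "t powr x = t * t powr (x - 1)" if "t \<ge> 0" for t :: real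
    using that by (cases "t = 0") (simp_all add: powr_mult_base)
  then have "((\<lambda>t. t powr (x + 1 - 1) * exp (- t) - c * (t powr (x - 1) * exp (- t))) has_integral
          lower_inc_gamma (x + 1) y - c * lower_inc_gamma x y) {0..y}
        \<longleftrightarrow> ((\<lambda>t. (t - c) * t powr (x - 1) * exp (- t)) has_integral
          lower_inc_gamma (x + 1) y - c * lower_inc_gamma x y) {0..y}"
    by (intro has_integral_cong) (auto simp: algebra_simps)
  moreover have "((\<lambda>t. t powr (x + 1 - 1) * exp (- t) - c * (t powr (x - 1) * exp (- t))) has_integral
          lower_inc_gamma (x + 1) y - c * lower_inc_gamma x y) {0..y}"
    using assms(1)
    by (intro has_integral_diff has_integral_mult_right has_integral_lower_inc_gamma) auto
  ultimately show ?thesis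
    using \<open>y > 0\<close> by (simp add: gamma_moment_def powr_mult_base algebra_simps)
qed

lemma mult_powr_diff_pos:
  fixes t c d :: real
  assumes "t \<ge> 0" "c \<ge> 0" "d > 0" "t \<noteq> c"
  shows "(t - c) * (t powr d - c powr d) > 0"
proof (cases "t < c")
  case True
  then have "t powr d < c powr d" using assms by (intro powr_less_mono2) auto
  then show ?thesis using True by (simp add: mult_neg_neg)
next
  case False
  then have "c powr d < t powr d" using assms by (intro powr_less_mono2) auto
  then show ?thesis using False assms(4) by simp
qed

lemma mult_powr_diff_nonneg:
  fixes t c d :: real
  assumes "t \<ge> 0" "c \<ge> 0" "d > 0"
  shows "(t - c) * (t powr d - c powr d) \<ge> 0"
  using mult_powr_diff_pos[OF assms] by (cases "t = c") auto

lemma integral_pos_if_pos_at: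
  fixes f :: "real \<Rightarrow> real"
  assumes "continuous_on {a..b} f" "a < b" "\<And>t. t \<in> {a..b} \<Longrightarrow> f t \<ge> 0"
    and "x \<in> {a..b}" "f x > 0"
  shows "integral {a..b} f > 0"
proof -
  have "integral {a..b} f \<noteq> 0"
    using integral_eq_0_iff[OF assms(1-3)] assms(4,5) by force
  moreover have "integral {a..b} f \<ge> 0"
    using assms(1,3) by (intro integral_nonneg integrable_continuous_real) auto
  ultimately show ?thesis by simp
qed

lemma has_integral_gamma_moment_shift:
  assumes "y > 0" "1 < a" "a < b"
  shows "((\<lambda>t. (t - c) * (t powr (b - a) - c powr (b - a)) * t powr (a - 1) * exp (- t)) has_integral
      gamma_moment (b + 1) y - c * gamma_moment b y
      - (y - c) * (y powr (b - a) - c powr (b - a)) * y powr (a - 1) * exp (- y)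
      - c powr (b - a) * (gamma_moment (a + 1) y - c * gamma_moment a y)) {0..y}"
proof -
  have powr_b: "t powr (b - 1) = t powr (b - a) * t powr (a - 1)" for t :: real
    by (simp flip: powr_add)
  have "((\<lambda>t. (t - c) * t powr (b - 1) * exp (- t) - c powr (b - a) * ((t - c) * t powr (a - 1) * exp (- t)))
      has_integral (gamma_moment (b + 1) y - c * gamma_moment b y - (y - c) * y powr (b - 1) * exp (- y))
        - c powr (b - a) * (gamma_moment (a + 1) y - c * gamma_moment a y
          - (y - c) * y powr (a - 1) * exp (- y))) {0..y}"
    using assms
    by (intro has_integral_diff has_integral_mult_right has_integral_gamma_moment_centered) auto
  then show ?thesis
    by (simp add: powr_b algebra_simps)
qed

lemma gamma_moment_ratio_strict_mono:
  assumes y: "y > 0" and "1 < a" "a < b"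
  shows "gamma_moment (a + 1) y / gamma_moment a y < gamma_moment (b + 1) y / gamma_moment b y"
proof -
  define M where "M x = gamma_moment x y" for x
  define c where "c = M (a + 1) / M a"
  define d where "d = b - a"
  define h where "h t = (t - c) * (t powr d - c powr d) * t powr (a - 1) * exp (- t)" for t
  have "M a > 0" "M (a + 1) > 0" "M b > 0"
    using gamma_moment_pos assms unfolding M_def by auto
  then have "c > 0" and centered_a: "M (a + 1) - c * M a = 0"
    unfolding c_def by simp_all
  have "d > 0" using assms unfolding d_def by simp
  have h_integral: "integral {0..y} h
      = M (b + 1) - c * M b - (y - c) * (y powr d - c powr d) * y powr (a - 1) * exp (- y)"
    using integral_unique[OF has_integral_gamma_moment_shift[OF assms, of c]] centered_a
    unfolding h_def M_def d_def by simp
  have h_nonneg: "h t \<ge> 0" if "t \<in> {0..y}" for t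
    unfolding h_def using mult_powr_diff_nonneg[of t c d] that \<open>c > 0\<close> \<open>d > 0\<close> by simp
  define t0 where "t0 = min y (c / 2)"
  have t0: "t0 \<in> {0<..y}" "t0 \<noteq> c"
    unfolding t0_def using y \<open>c > 0\<close> by (auto simp: min_def)
  then have "h t0 > 0"
    unfolding h_def using mult_powr_diff_pos[of t0 c d] \<open>c > 0\<close> \<open>d > 0\<close> by simp
  moreover have "continuous_on {0..y} h"
    unfolding h_def using \<open>d > 0\<close> assms
    by (intro continuous_intros continuous_on_powr') auto
  ultimately have "integral {0..y} h > 0"
    using integral_pos_if_pos_at[of 0 y h t0] h_nonneg t0 y by auto
  moreover have "(y - c) * (y powr d - c powr d) * y powr (a - 1) * exp (- y) \<ge> 0"
    using mult_powr_diff_nonneg[of y c d] y \<open>c > 0\<close> \<open>d > 0\<close> by simp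
  ultimately have "M (b + 1) - c * M b > 0"
    using h_integral by linarith
  then show ?thesis
    using \<open>M b > 0\<close> unfolding M_def c_def by (simp add: field_simps)
qed

theorem theorem8:
  fixes y :: real
  assumes "y > 0"
  shows "strict_mono_on {1<..} (\<lambda>a. p_fun a y)"
proof (rule strict_mono_onI)
  fix a b :: real
  assume "a \<in> {1<..}" "b \<in> {1<..}" "a < b"
  then show "p_fun a y < p_fun b y"
    using gamma_moment_ratio_strict_mono[OF assms] p_fun_eq_gamma_moment_ratio[OF _ assms]
    by simp
qed

end
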